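(* Let $H$ be a Hilbert space with orthonormal system $\{e_m\}_{m\ge1}$. For $n\in\mathbb N$ let $k_n:=[\sqrt n]$ and let $g_p(n)$, $p=1,\dots,2^{k_n}$, be the vertices of the unit cube in $\operatorname{span}\{e_{2(n+1)},\dots,e_{2(n+k_n)}\}$, i.e. all vectors $\sum_{j=1}^{k_n}a_je_{2(n+j)}$ with $a_j\in\{0,1\}$. Let $\gamma>0$ and let $(\varepsilon_n)$ be positive numbers with $ce^{-\gamma n^2}\le\varepsilon_n\le Ce^{-\gamma n^2}$ for some constants $0<c\le C$. Let $\mathcal B\subset H$ be a compact set such that $\varepsilon_ng_p(n)\in\mathcal B$ for all $n\ge n_0$ (some $n_0$) and all $p=1,\dots,2^{k_n}$. Then the log-doubling factor of $\mathcal B$ is infinite, i.e. $\dim_{Log-D}(\mathcal B)=\infty$.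
   Context: For a compact metric space $X$ and $B\subset X$, $N_\varepsilon(B,X)$ is the minimal number of $\varepsilon$-balls of $X$ covering $B$; $D_\varepsilon(X):=\sup_{x\in X}N_{\varepsilon/2}(B(\varepsilon,x),X)$ where $B(r,x)$ is the ball of radius $r$ in $X$ centered at $x$; and $\dim_{Log-D}(X):=\limsup_{\varepsilon\to0}\frac{\log D_\varepsilon(X)}{\log\log(1/\varepsilon)}$. *)

theory Defs
  imports "HOL-Analysis.Analysis"
begin

text \<open>N_eps(B,X): minimal number of eps-balls of X (centres in X, open balls taken in X)
  covering B; infinity if no finite cover exists.\<close>
definition cov_num :: "real \<Rightarrow> 'a::metric_space set \<Rightarrow> 'a set \<Rightarrow> ereal" where
  "cov_num \<epsilon> B X = Inf {ereal (real (card C)) | C. finite C \<and> C \<subseteq> X \<and>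
       B \<subseteq> (\<Union>c\<in>C. ball c \<epsilon> \<inter> X)}"

definition doubling_D :: "real \<Rightarrow> 'a::metric_space set \<Rightarrow> ereal" where
  "doubling_D \<epsilon> X = (SUP x\<in>X. cov_num (\<epsilon>/2) (ball x \<epsilon> \<inter> X) X)"

text \<open>Log-doubling dimension: limsup as eps -> 0+ of log D_eps(X) / log log (1/eps).
  For compact X, D_eps(X) is finite, so the real logarithm is applied to its real value.\<close>
definition dim_LogD :: "'a::metric_space set \<Rightarrow> ereal" where
  "dim_LogD X = Limsup (at_right 0)
     (\<lambda>\<epsilon>. ereal (ln (real_of_ereal (doubling_D \<epsilon> X)) / ln (ln (1 / \<epsilon>))))"

definition kn :: "nat \<Rightarrow> nat" where
  "kn n = nat \<lfloor>sqrt (real n)\<rfloor>"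

definition cube_vertices :: "(nat \<Rightarrow> 'a::real_vector) \<Rightarrow> nat \<Rightarrow> 'a set" where
  "cube_vertices e n = {(\<Sum>j=1..kn n. a j *\<^sub>R e (2 * (n + j))) | a. \<forall>j. a j \<in> {0, 1}}"

end

theory Submission
  imports Defs "HOL-Real_Asymp.Real_Asymp"
begin

text \<open>Fix t and put x = eps(N^2) * sqrt(2t+1). Since k(N^2) = N, the scaled cube vertices
  eps(N^2) g_S, for S a subset of {1..N}, are at distance eps(N^2) sqrt |S symdiff S'| from each
  other. For a packing of 2t-subsets of {1..N} with pairwise intersections of size less than t, the
  corresponding vertices lie in the x-ball around the vertex of the empty set and are pairwise more
  than x apart, so no x/2-ball contains two of them and D_x(B) is at least the size of the packing.
  A maximal packing has at least (N/2t)^t / C(2t,t)^2 blocks, hence log D_x >= t log N - O_t(1),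
  whereas x >= c exp(-gamma N^4) gives log log (1/x) <= 5 log N. So the ratio defining the
  log-doubling dimension is at least (t-1)/5 along a sequence of scales tending to 0.\<close>

lemma power2_norm_sum_orthonormal:
  fixes u :: "'i \<Rightarrow> 'a::real_inner"
  assumes "finite I"
    and orth: "\<And>i j. i \<in> I \<Longrightarrow> j \<in> I \<Longrightarrow> inner (u i) (u j) = (if i = j then 1 else 0)"
  shows "(norm (\<Sum>i\<in>I. f i *\<^sub>R u i))\<^sup>2 = (\<Sum>i\<in>I. (f i)\<^sup>2)"
proof -
  have "(norm (\<Sum>i\<in>I. f i *\<^sub>R u i))\<^sup>2 = (\<Sum>i\<in>I. \<Sum>j\<in>I. f i * f j * inner (u j) (u i))"
    unfolding power2_norm_eq_inner inner_sum_left inner_sum_right inner_scaleR_left inner_scaleR_right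
    by (intro sum.cong refl) (simp add: sum_distrib_left mult.assoc mult.left_commute)
  also have "\<dots> = (\<Sum>i\<in>I. \<Sum>j\<in>I. if i = j then f i * f j else 0)"
    using orth by (intro sum.cong refl) auto
  also have "\<dots> = (\<Sum>i\<in>I. (f i)\<^sup>2)"
    using \<open>finite I\<close> by (simp add: power2_eq_square)
  finally show ?thesis .
qed

definition cube_vertex :: "(nat \<Rightarrow> 'a::real_vector) \<Rightarrow> nat \<Rightarrow> nat set \<Rightarrow> 'a" where
  "cube_vertex e n S = (\<Sum>j=1..kn n. of_bool (j \<in> S) *\<^sub>R e (2 * (n + j)))"

lemma cube_vertex_in_cube_vertices: "cube_vertex e n S \<in> cube_vertices e n"
  unfolding cube_vertices_def cube_vertex_def by (rule CollectI, rule exI[of _ "\<lambda>j. of_bool (j \<in> S)"]) auto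

lemma power2_dist_cube_vertex:
  fixes e :: "nat \<Rightarrow> 'a::real_inner"
  assumes orth: "\<forall>m\<ge>1. \<forall>l\<ge>1. inner (e m) (e l) = (if m = l then 1 else 0)"
    and "S \<subseteq> {1..kn n}" "S' \<subseteq> {1..kn n}"
  shows "(dist (cube_vertex e n S) (cube_vertex e n S'))\<^sup>2 = real (card (sym_diff S S'))"
proof -
  have diff: "cube_vertex e n S - cube_vertex e n S'
      = (\<Sum>j=1..kn n. (of_bool (j \<in> S) - of_bool (j \<in> S')) *\<^sub>R e (2 * (n + j)))"
    unfolding cube_vertex_def by (simp add: sum_subtractf scaleR_left_diff_distrib)
  have "(dist (cube_vertex e n S) (cube_vertex e n S'))\<^sup>2
      = (\<Sum>j=1..kn n. (of_bool (j \<in> S) - of_bool (j \<in> S'))\<^sup>2)"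
    unfolding dist_norm diff by (rule power2_norm_sum_orthonormal) (use orth in auto)
  also have "\<dots> = (\<Sum>j=1..kn n. of_bool (j \<in> sym_diff S S'))"
    by (intro sum.cong refl) auto
  also have "\<dots> = real (card (sym_diff S S'))"
    by (subst sum_of_bool_eq) (use assms(2,3) in \<open>auto intro!: arg_cong[where f = card]\<close>)
  finally show ?thesis .
qed

subsection \<open>Covering numbers and the doubling function\<close>

lemma card_le_cov_num:
  fixes p :: "'i \<Rightarrow> 'a::metric_space"
  assumes "p ` I \<subseteq> A"
    and sep: "\<And>i j. i \<in> I \<Longrightarrow> j \<in> I \<Longrightarrow> i \<noteq> j \<Longrightarrow> 2 * \<delta> \<le> dist (p i) (p j)"
  shows "ereal (real (card I)) \<le> cov_num \<delta> A X"
  unfolding cov_num_def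
proof (rule Inf_greatest, clarify)
  fix C assume C: "finite C" "C \<subseteq> X" "A \<subseteq> (\<Union>c\<in>C. ball c \<delta> \<inter> X)"
  have "\<exists>c. c \<in> C \<and> dist c (p i) < \<delta>" if "i \<in> I" for i
  proof -
    have "p i \<in> (\<Union>c\<in>C. ball c \<delta> \<inter> X)"
      using C(3) assms(1) that by blast
    then show ?thesis by auto
  qed
  then obtain h where h: "\<And>i. i \<in> I \<Longrightarrow> h i \<in> C \<and> dist (h i) (p i) < \<delta>"
    by metis
  have "inj_on h I"
  proof (rule inj_onI, rule ccontr)
    fix i j assume ij: "i \<in> I" "j \<in> I" "h i = h j" "i \<noteq> j"
    have "dist (p i) (p j) \<le> dist (h i) (p i) + dist (h j) (p j)"
      using dist_triangle3[of "p i" "p j" "h i"] ij(3) by simp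
    also have "\<dots> < 2 * \<delta>"
      using h[OF ij(1)] h[OF ij(2)] by simp
    finally show False
      using sep[OF ij(1,2,4)] by simp
  qed
  then have "card I \<le> card C"
    using h C(1) by (intro card_inj_on_le) auto
  then show "ereal (real (card I)) \<le> ereal (real (card C))"
    by simp
qed

lemma doubling_D_less_infinity:
  assumes "compact X" "r > 0"
  shows "doubling_D r X < \<infinity>"
proof -
  obtain C where C: "finite C" "C \<subseteq> X" "X \<subseteq> (\<Union>c\<in>C. ball c (r/2))"
    using seq_compact_imp_totally_bounded[OF compact_imp_seq_compact[OF \<open>compact X\<close>]] \<open>r > 0\<close>
    by (meson half_gt_zero)
  have "doubling_D r X \<le> ereal (real (card C))"
    unfolding doubling_D_def cov_num_def using C by (intro SUP_least Inf_lower) blast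
  then show ?thesis
    by (cases "doubling_D r X") auto
qed

lemma card_le_doubling_D:
  fixes p :: "'i \<Rightarrow> 'a::metric_space"
  assumes "compact X" "r > 0" "y \<in> X" "p ` I \<subseteq> ball y r \<inter> X"
    and sep: "\<And>i j. i \<in> I \<Longrightarrow> j \<in> I \<Longrightarrow> i \<noteq> j \<Longrightarrow> r \<le> dist (p i) (p j)"
  shows "real (card I) \<le> real_of_ereal (doubling_D r X)"
proof -
  have "ereal (real (card I)) \<le> cov_num (r/2) (ball y r \<inter> X) X"
    using assms(4) sep by (intro card_le_cov_num) auto
  also have "\<dots> \<le> doubling_D r X"
    unfolding doubling_D_def using \<open>y \<in> X\<close> by (rule SUP_upper)
  finally show ?thesis
    using doubling_D_less_infinity[OF assms(1,2)] by (cases "doubling_D r X") auto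
qed

subsection \<open>Packings\<close>

text \<open>A packing in the sense of design theory: no \<open>t\<close>-subset of \<open>U\<close> lies in two of the
  \<open>k\<close>-element blocks.\<close>

definition is_packing :: "'a set \<Rightarrow> nat \<Rightarrow> nat \<Rightarrow> 'a set set \<Rightarrow> bool" where
  "is_packing U k t F \<longleftrightarrow>
     (\<forall>S\<in>F. S \<subseteq> U \<and> card S = k) \<and> (\<forall>S\<in>F. \<forall>S'\<in>F. S \<noteq> S' \<longrightarrow> card (S \<inter> S') < t)"

lemma card_sym_diff:
  assumes "finite S" "finite S'"
  shows "card (sym_diff S S') + 2 * card (S \<inter> S') = card S + card S'"
proof -
  have "card (sym_diff S S') = card (S - S') + card (S' - S)"
    by (rule card_Un_disjoint) (use assms in auto)
  moreover have "card (S - S') = card S - card (S \<inter> S')" "card (S' - S) = card S' - card (S \<inter> S')"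
    using assms by (simp_all add: card_Diff_subset_Int Int_commute)
  moreover have "card (S \<inter> S') \<le> card S" "card (S \<inter> S') \<le> card S'"
    using assms by (simp_all add: card_mono)
  ultimately show ?thesis by linarith
qed

lemma card_subsets_meeting_le:
  assumes "finite U" "finite S'"
  shows "card {S. S \<subseteq> U \<and> card S = k \<and> t \<le> card (S \<inter> S')}
           \<le> (card S' choose t) * (card U choose (k - t))"
proof -
  define P where "P = {T. T \<subseteq> S' \<and> card T = t} \<times> {R. R \<subseteq> U \<and> card R = k - t}"
  have "finite P"
    unfolding P_def using assms by (auto intro: rev_finite_subset[of "Pow _"])
  have split: "S \<in> (\<lambda>(T, R). T \<union> R) ` P"
    if S: "S \<subseteq> U" "card S = k" "t \<le> card (S \<inter> S')" for S
  proof -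
    obtain T where T: "T \<subseteq> S \<inter> S'" "card T = t"
      using obtain_subset_with_card_n[OF S(3)] by blast
    have "finite S"
      using S(1) assms(1) finite_subset by blast
    then have "card (S - T) = k - t"
      using T S(2) by (metis card_Diff_subset finite_subset le_inf_iff)
    then have "(T, S - T) \<in> P"
      unfolding P_def using T S(1) by auto
    then show ?thesis
      by (rule rev_image_eqI) (use T(1) in auto)
  qed
  have "card {S. S \<subseteq> U \<and> card S = k \<and> t \<le> card (S \<inter> S')} \<le> card ((\<lambda>(T, R). T \<union> R) ` P)"
    using split by (intro card_mono finite_imageI \<open>finite P\<close>) auto
  also have "\<dots> \<le> card P"
    by (rule card_image_le[OF \<open>finite P\<close>])
  also have "card P = (card S' choose t) * (card U choose (k - t))"
    unfolding P_def card_cartesian_product n_subsets[OF assms(1)] n_subsets[OF assms(2)] ..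
  finally show ?thesis .
qed

text \<open>A packing of maximal size: every \<open>k\<close>-subset of \<open>U\<close> meets one of its blocks in at least
  \<open>t\<close> points, so the \<open>k\<close>-subsets are covered by \<open>card F\<close> sets counted by the previous lemma.\<close>

lemma exists_packing:
  assumes "finite U" "t \<le> k"
  shows "\<exists>F. is_packing U k t F \<and> card U choose k \<le> card F * ((k choose t) * (card U choose (k - t)))"
proof -
  have packing_Pow: "F \<subseteq> Pow U" if "is_packing U k t F" for F
    using that unfolding is_packing_def by auto
  have "card F \<le> card (Pow U)" if "is_packing U k t F" for F
    using packing_Pow[OF that] assms(1) by (simp add: card_mono)
  moreover have "is_packing U k t {}"
    unfolding is_packing_def by simp
  ultimately obtain F where F: "is_packing U k t F"
    and max: "\<And>G. is_packing U k t G \<Longrightarrow> card G \<le> card F"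
    using ex_has_greatest_nat[of "is_packing U k t" "{}" card "Suc (card (Pow U))"]
    by (metis less_Suc_eq_le)
  have "finite F"
    using packing_Pow[OF F] assms(1) finite_subset by auto
  define meeting where "meeting S' = {S. S \<subseteq> U \<and> card S = k \<and> t \<le> card (S \<inter> S')}" for S'
  have cover: "{S. S \<subseteq> U \<and> card S = k} \<subseteq> (\<Union>S'\<in>F. meeting S')"
  proof (rule subsetI, rule ccontr)
    fix S assume S: "S \<in> {S. S \<subseteq> U \<and> card S = k}" and "S \<notin> (\<Union>S'\<in>F. meeting S')"
    then have small: "card (S \<inter> S') < t" if "S' \<in> F" for S'
      using that unfolding meeting_def by auto
    then have "S \<notin> F"
      using S assms(2) by fastforce
    moreover have "is_packing U k t (insert S F)"
      using F S small unfolding is_packing_def by (auto simp: Int_commute)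
    ultimately show False
      using max[of "insert S F"] \<open>finite F\<close> by simp
  qed
  have "card U choose k = card {S. S \<subseteq> U \<and> card S = k}"
    using n_subsets[OF assms(1)] by simp
  also have "\<dots> \<le> card (\<Union>S'\<in>F. meeting S')"
    using cover \<open>finite F\<close> assms(1) by (intro card_mono) (auto simp: meeting_def)
  also have "\<dots> \<le> (\<Sum>S'\<in>F. card (meeting S'))"
    by (rule card_UN_le[OF \<open>finite F\<close>])
  also have "\<dots> \<le> (\<Sum>S'\<in>F. (k choose t) * (card U choose (k - t)))"
  proof (rule sum_mono)
    fix S' assume "S' \<in> F"
    then have "S' \<subseteq> U" "card S' = k"
      using F unfolding is_packing_def by auto
    then show "card (meeting S') \<le> (k choose t) * (card U choose (k - t))"
      unfolding meeting_def using card_subsets_meeting_le[OF assms(1), of S' k t] assms(1)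
      by (metis finite_subset)
  qed
  finally show ?thesis
    using F by auto
qed

lemma binomial_ratio_ge:
  fixes N t :: nat
  assumes "2 * t \<le> N"
  shows "(real N / (2 * real t)) ^ t * real (N choose t) \<le> real (N choose (2 * t)) * real ((2 * t) choose t)"
proof -
  have "real N / (2 * real t) \<le> real (N - t) / real t"
    using assms by (cases "t = 0") (auto simp: divide_simps)
  then have "(real N / (2 * real t)) ^ t \<le> (real (N - t) / real t) ^ t"
    by (intro power_mono) auto
  also have "\<dots> \<le> real ((N - t) choose t)"
    using assms by (intro binomial_ge_n_over_k_pow_k) simp
  finally have "(real N / (2 * real t)) ^ t * real (N choose t) \<le> real ((N - t) choose t) * real (N choose t)"
    by (intro mult_right_mono) auto
  also have "\<dots> = real (N choose (2 * t)) * real ((2 * t) choose t)"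
    using choose_mult[of t "2 * t" N] assms by (simp flip: of_nat_mult add: mult.commute)
  finally show ?thesis .
qed

lemma exists_large_packing:
  assumes "2 * t \<le> N"
  shows "\<exists>F. is_packing {1..N} (2 * t) t F \<and>
             (real N / (2 * real t)) ^ t \<le> real (card F) * real ((2 * t) choose t) ^ 2"
proof -
  obtain F where F: "is_packing {1..N} (2 * t) t F"
    and bound: "N choose (2 * t) \<le> card F * (((2 * t) choose t) * (N choose t))"
    using exists_packing[of "{1..N}" t "2 * t"] by auto
  define b where "b = real ((2 * t) choose t)"
  have "(real N / (2 * real t)) ^ t * real (N choose t) \<le> real (N choose (2 * t)) * b"
    unfolding b_def using binomial_ratio_ge[OF assms] .
  also have "\<dots> \<le> real (card F) * (b * real (N choose t)) * b"
    using bound unfolding b_def by (intro mult_right_mono) (simp_all flip: of_nat_mult)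
  also have "\<dots> = real (card F) * b ^ 2 * real (N choose t)"
    by (simp add: power2_eq_square)
  finally have "(real N / (2 * real t)) ^ t \<le> real (card F) * b ^ 2"
    by (rule mult_right_le_imp_le) (use assms in simp)
  then show ?thesis
    using F unfolding b_def by blast
qed

lemma kn_square [simp]: "kn (N\<^sup>2) = N"
  by (simp add: kn_def)

lemma card_packing_le_doubling_D:
  fixes e :: "nat \<Rightarrow> 'a::real_inner"
  assumes orth: "\<forall>m\<ge>1. \<forall>l\<ge>1. inner (e m) (e l) = (if m = l then 1 else 0)"
    and "\<epsilon> > 0" "compact B" and vertices: "\<forall>g\<in>cube_vertices e n. \<epsilon> *\<^sub>R g \<in> B"
    and F: "is_packing {1..kn n} (2 * t) t F"
  shows "real (card F) \<le> real_of_ereal (doubling_D (\<epsilon> * sqrt (2 * t + 1)) B)"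
proof -
  define p where "p S = \<epsilon> *\<^sub>R cube_vertex e n S" for S
  define r where "r = \<epsilon> * sqrt (2 * t + 1)"
  have "r > 0" and r2: "r\<^sup>2 = \<epsilon>\<^sup>2 * (2 * t + 1)"
    using \<open>\<epsilon> > 0\<close> by (simp_all add: r_def power_mult_distrib)
  have pB: "p S \<in> B" for S
    unfolding p_def using vertices cube_vertex_in_cube_vertices by blast
  have dist_p: "(dist (p S) (p S'))\<^sup>2 = \<epsilon>\<^sup>2 * real (card (sym_diff S S'))"
    if "S \<subseteq> {1..kn n}" "S' \<subseteq> {1..kn n}" for S S'
  proof -
    have "dist (p S) (p S') = \<epsilon> * dist (cube_vertex e n S) (cube_vertex e n S')"
      unfolding p_def dist_norm using \<open>\<epsilon> > 0\<close> by (simp flip: scaleR_diff_right)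
    then show ?thesis
      using power2_dist_cube_vertex[OF orth that] by (simp add: power_mult_distrib)
  qed
  have blocks: "S \<subseteq> {1..kn n}" "card S = 2 * t" "finite S" if "S \<in> F" for S
    using F that unfolding is_packing_def by (auto intro: finite_subset)
  have "real (card F) \<le> real_of_ereal (doubling_D r B)"
  proof (rule card_le_doubling_D)
    show "p ` F \<subseteq> ball (p {}) r \<inter> B"
    proof (rule image_subsetI)
      fix S assume "S \<in> F"
      then have "(dist (p {}) (p S))\<^sup>2 < r\<^sup>2"
        using dist_p[of "{}" S] blocks[of S] r2 \<open>\<epsilon> > 0\<close> by simp
      then show "p S \<in> ball (p {}) r \<inter> B"
        using pB \<open>r > 0\<close> by (auto dest: power2_less_imp_less)
    qed
    show "r \<le> dist (p S) (p S')" if "S \<in> F" "S' \<in> F" "S \<noteq> S'" for S S'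
    proof -
      have "card (S \<inter> S') < t"
        using F that unfolding is_packing_def by blast
      then have "2 * t + 1 \<le> card (sym_diff S S')"
        using card_sym_diff[of S S'] blocks[OF that(1)] blocks[OF that(2)] by linarith
      then have "r\<^sup>2 \<le> (dist (p S) (p S'))\<^sup>2"
        unfolding r2 dist_p[OF blocks(1)[OF that(1)] blocks(1)[OF that(2)]]
        by (intro mult_left_mono) auto
      then show ?thesis
        by (rule power2_le_imp_le) simp
    qed
  qed (use \<open>compact B\<close> \<open>r > 0\<close> pB in auto)
  then show ?thesis
    unfolding r_def .
qed

lemma ln_doubling_D_ge:
  fixes e :: "nat \<Rightarrow> 'a::real_inner"
  assumes orth: "\<forall>m\<ge>1. \<forall>l\<ge>1. inner (e m) (e l) = (if m = l then 1 else 0)"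
    and "\<epsilon> > 0" "compact B" "\<forall>g\<in>cube_vertices e (N\<^sup>2). \<epsilon> *\<^sub>R g \<in> B"
    and "1 \<le> t" "2 * t \<le> N"
  shows "real t * ln (real N) - (real t * ln (2 * real t) + 2 * ln (real ((2 * t) choose t)))
           \<le> ln (real_of_ereal (doubling_D (\<epsilon> * sqrt (2 * t + 1)) B))"
proof -
  define D where "D = real_of_ereal (doubling_D (\<epsilon> * sqrt (2 * t + 1)) B)"
  define b where "b = real ((2 * t) choose t)"
  obtain F where F: "is_packing {1..N} (2 * t) t F"
    and bound: "(real N / (2 * real t)) ^ t \<le> real (card F) * b\<^sup>2"
    using exists_large_packing[OF assms(6)] unfolding b_def by blast
  have "real (card F) \<le> D"
    unfolding D_def using card_packing_le_doubling_D[OF orth assms(2,3,4)] F by simp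
  then have le: "(real N / (2 * real t)) ^ t \<le> D * b\<^sup>2"
    using bound by (meson mult_right_mono order_trans zero_le_power2)
  have pos: "(real N / (2 * real t)) ^ t > 0" and "b > 0"
    using assms(5,6) by (simp_all add: b_def)
  with le have "D > 0"
    by (smt (verit) mult_nonpos_nonneg zero_le_power2)
  have "ln ((real N / (2 * real t)) ^ t) \<le> ln (D * b\<^sup>2)"
    using le pos by simp
  then show ?thesis
    using pos \<open>D > 0\<close> \<open>b > 0\<close> assms(5,6)
    by (simp add: D_def b_def ln_mult ln_div ln_realpow algebra_simps)
qed

subsection \<open>Asymptotics\<close>

lemma le_Limsup_filterlim:
  assumes "filterlim x F G" "G \<noteq> bot" "\<forall>\<^sub>F n in G. l \<le> f (x n)"
  shows "l \<le> Limsup F f"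
proof -
  have "l \<le> Limsup (filtermap x G) f"
    using assms(2,3) by (intro le_Limsup) (simp_all add: eventually_filtermap filtermap_bot_iff)
  also have "\<dots> \<le> Limsup F f"
    using assms(1) unfolding filterlim_def Limsup_def le_filter_def
    by (intro INF_superset_mono) auto
  finally show ?thesis .
qed

lemma eventually_ln_ln_inverse_le:
  fixes x :: "nat \<Rightarrow> real"
  assumes "x \<longlonglongrightarrow> 0" "c > 0" "\<gamma> > 0"
    and lower: "\<And>N. c * exp (- \<gamma> * real N ^ 4) \<le> x N"
  shows "\<forall>\<^sub>F N in sequentially. 0 < ln (ln (1 / x N)) \<and> ln (ln (1 / x N)) \<le> 5 * ln (real N)"
proof -
  have "\<forall>\<^sub>F N in sequentially. x N < 1/3"
    using order_tendstoD(2)[OF assms(1), of "1/3"] by simp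
  moreover have "\<forall>\<^sub>F N in sequentially. \<gamma> * real N ^ 4 - ln c \<le> real N ^ 5"
    using \<open>\<gamma> > 0\<close> by real_asymp
  moreover have "\<forall>\<^sub>F N in sequentially. 1 \<le> N"
    by (rule eventually_ge_at_top)
  ultimately show ?thesis
  proof eventually_elim
    case (elim N)
    have "0 < c * exp (- \<gamma> * real N ^ 4)"
      using \<open>c > 0\<close> by simp
    then have "x N > 0" and "ln (c * exp (- \<gamma> * real N ^ 4)) \<le> ln (x N)"
      using lower[of N] by simp_all
    then have upper: "ln (1 / x N) \<le> real N ^ 5"
      using elim \<open>c > 0\<close> by (simp add: ln_mult ln_div)
    have "exp 1 * x N < 1"
      using mult_right_mono[OF exp_le, of "x N"] \<open>x N > 0\<close> elim by linarith
    then have "exp 1 < 1 / x N"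
      using \<open>x N > 0\<close> by (simp add: field_simps)
    then have ln_gt_1: "1 < ln (1 / x N)"
      using \<open>x N > 0\<close> by (metis exp_less_cancel_iff exp_ln zero_less_divide_1_iff)
    have "ln (ln (1 / x N)) \<le> ln (real N ^ 5)"
      using upper ln_gt_1 elim by (subst ln_le_cancel_iff) auto
    then show ?case
      using ln_gt_1 elim by (simp add: ln_realpow)
  qed
qed

lemma tendsto_eps_square:
  fixes \<epsilon> :: "nat \<Rightarrow> real"
  assumes "\<gamma> > 0" "s \<ge> 0" "\<And>n. 0 < \<epsilon> n" "\<And>n. \<epsilon> n \<le> C * exp (- \<gamma> * real n ^ 2)"
  shows "(\<lambda>N. \<epsilon> (N\<^sup>2) * s) \<longlonglongrightarrow> 0"
proof (rule tendsto_sandwich[of "\<lambda>_. 0" _ _ "\<lambda>N. C * exp (- \<gamma> * real N ^ 4) * s"])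
  show "\<forall>\<^sub>F N in sequentially. 0 \<le> \<epsilon> (N\<^sup>2) * s"
    using assms(2,3) by (simp add: less_imp_le)
  have "\<epsilon> (N\<^sup>2) \<le> C * exp (- \<gamma> * real N ^ 4)" for N
    using assms(4)[of "N\<^sup>2"] by (simp flip: power_mult)
  then show "\<forall>\<^sub>F N in sequentially. \<epsilon> (N\<^sup>2) * s \<le> C * exp (- \<gamma> * real N ^ 4) * s"
    using assms(2) by (simp add: mult_right_mono)
  show "(\<lambda>N. C * exp (- \<gamma> * real N ^ 4) * s) \<longlonglongrightarrow> 0"
    using \<open>\<gamma> > 0\<close> by real_asymp
qed simp

lemma eventually_doubling_ratio_ge:
  fixes e :: "nat \<Rightarrow> 'a::real_inner"
  assumes orth: "\<forall>m\<ge>1. \<forall>l\<ge>1. inner (e m) (e l) = (if m = l then 1 else 0)"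
    and "\<gamma> > 0" "c > 0" and eps_pos: "\<forall>n. \<epsilon> n > 0"
    and eps_bounds: "\<forall>n. c * exp (- \<gamma> * real n ^ 2) \<le> \<epsilon> n \<and> \<epsilon> n \<le> C * exp (- \<gamma> * real n ^ 2)"
    and "compact B" and contains: "\<forall>n\<ge>n0. \<forall>g\<in>cube_vertices e n. \<epsilon> n *\<^sub>R g \<in> B"
    and "1 \<le> t"
  shows "\<forall>\<^sub>F N in sequentially. (real t - 1) / 5 \<le>
           ln (real_of_ereal (doubling_D (\<epsilon> (N\<^sup>2) * sqrt (2 * t + 1)) B))
             / ln (ln (1 / (\<epsilon> (N\<^sup>2) * sqrt (2 * t + 1))))"
proof -
  define x where "x N = \<epsilon> (N\<^sup>2) * sqrt (2 * t + 1)" for N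
  define K where "K = real t * ln (2 * real t) + 2 * ln (real ((2 * t) choose t))"
  have lower: "c * exp (- \<gamma> * real N ^ 4) \<le> x N" for N
  proof -
    have "c * exp (- \<gamma> * real N ^ 4) \<le> \<epsilon> (N\<^sup>2)"
      using eps_bounds[rule_format, of "N\<^sup>2"] by (simp flip: power_mult)
    also have "\<dots> \<le> x N"
      unfolding x_def using eps_pos[rule_format, of "N\<^sup>2"] by (simp add: mult_le_cancel_left1)
    finally show ?thesis .
  qed
  have "\<forall>\<^sub>F N in sequentially. 0 < ln (ln (1 / x N)) \<and> ln (ln (1 / x N)) \<le> 5 * ln (real N)"
    using \<open>\<gamma> > 0\<close> eps_pos eps_bounds unfolding x_def
    by (intro eventually_ln_ln_inverse_le[OF _ \<open>c > 0\<close> \<open>\<gamma> > 0\<close> lower[unfolded x_def]] tendsto_eps_square)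
      auto
  moreover have "\<forall>\<^sub>F N in sequentially. 2 * t \<le> N \<and> n0 \<le> N"
    by (intro eventually_conj eventually_ge_at_top)
  moreover have "\<forall>\<^sub>F N in sequentially. K \<le> ln (real N)"
    by real_asymp
  ultimately have "\<forall>\<^sub>F N in sequentially.
      (real t - 1) / 5 \<le> ln (real_of_ereal (doubling_D (x N) B)) / ln (ln (1 / x N))"
  proof eventually_elim
    case (elim N)
    have "n0 \<le> N\<^sup>2"
      using order_trans[OF conjunct2[OF elim(2)] le_square[of N]] by (simp add: power2_eq_square)
    then have "real t * ln (real N) - K \<le> ln (real_of_ereal (doubling_D (x N) B))"
      unfolding K_def x_def using contains eps_pos \<open>compact B\<close> \<open>1 \<le> t\<close> elim
      by (intro ln_doubling_D_ge[OF orth]) auto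
    then have "(real t - 1) * ln (real N) \<le> ln (real_of_ereal (doubling_D (x N) B))"
      using elim by (simp add: left_diff_distrib)
    moreover have "(real t - 1) / 5 * ln (ln (1 / x N)) \<le> (real t - 1) * ln (real N)"
      using elim \<open>1 \<le> t\<close> mult_left_mono[of "ln (ln (1 / x N))" "5 * ln (real N)" "(real t - 1) / 5"]
      by simp
    ultimately show ?case
      using elim by (simp add: pos_le_divide_eq)
  qed
  then show ?thesis
    by (simp add: x_def)
qed

theorem lemma3p4:
  fixes e :: "nat \<Rightarrow> 'a::{real_inner, complete_space}"
    and \<epsilon> :: "nat \<Rightarrow> real" and \<gamma> c C :: real and n0 :: nat
    and B :: "'a set"
  assumes orth: "\<forall>m\<ge>1. \<forall>l\<ge>1. inner (e m) (e l) = (if m = l then 1 else 0)"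
    and gamma: "\<gamma> > 0"
    and cC: "0 < c" "c \<le> C"
    and eps_pos: "\<forall>n. \<epsilon> n > 0"
    and eps_bounds: "\<forall>n. c * exp (- \<gamma> * real n ^ 2) \<le> \<epsilon> n \<and> \<epsilon> n \<le> C * exp (- \<gamma> * real n ^ 2)"
    and cpt: "compact B"
    and contains: "\<forall>n\<ge>n0. \<forall>g\<in>cube_vertices e n. \<epsilon> n *\<^sub>R g \<in> B"
  shows "dim_LogD B = \<infinity>"
proof -
  define f where "f = (\<lambda>y. ereal (ln (real_of_ereal (doubling_D y B)) / ln (ln (1 / y))))"
  have Limsup_ge: "ereal ((real t - 1) / 5) \<le> Limsup (at_right 0) f" if "1 \<le> t" for t :: nat
  proof (rule le_Limsup_filterlim)
    show "filterlim (\<lambda>N. \<epsilon> (N\<^sup>2) * sqrt (2 * t + 1)) (at_right 0) sequentially"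
      using gamma eps_pos eps_bounds by (intro tendsto_imp_filterlim_at_right tendsto_eps_square) auto
    show "\<forall>\<^sub>F N in sequentially. ereal ((real t - 1) / 5) \<le> f (\<epsilon> (N\<^sup>2) * sqrt (2 * t + 1))"
      using eventually_doubling_ratio_ge[OF orth gamma cC(1) eps_pos eps_bounds cpt contains that]
      unfolding f_def by simp
  qed simp
  have "ereal L \<le> Limsup (at_right 0) f" for L
  proof -
    have "L \<le> (real (nat \<lceil>5 * L\<rceil> + 1) - 1) / 5"
      using real_nat_ceiling_ge[of "5 * L"] by simp
    moreover have "ereal ((real (nat \<lceil>5 * L\<rceil> + 1) - 1) / 5) \<le> Limsup (at_right 0) f"
      by (rule Limsup_ge) simp
    ultimately show ?thesis
      by (meson ereal_less_eq(3) order_trans)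
  qed
  then show ?thesis
    unfolding dim_LogD_def f_def[symmetric] by (rule ereal_top)
qed

end
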